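(* Let $\sigma\ge0$, $\alpha\ge0$, let $0<a<b$ be defined as follows: if $\alpha>0$, $a=\max(\sigma,a_c)$ and $b$ is the unique $x>a$ with $\psi_\alpha(x,a)=0$; if $\alpha=0$, $a=\sigma>0$ and $b=\frac23\big(\sqrt{\sigma^2+6}+\frac\sigma2\big)$. Let $\nu^a_\alpha$ be the probability measure on $]a,b]$ with density $\frac1{2\pi}\sqrt{\frac{b-x}{x-a}}\Big(2x+b-a-2\alpha\sqrt{\frac ab}\frac1x\Big)$, and let $C$ be the constant such that $\int\log\frac1{|x-t|}\nu^a_\alpha(dt)+\frac12\big(x^2+2\alpha\log\frac1x\big)=C$ for $x\in\,]a,b]$. Then $$\begin{aligned}C&=-\frac1{16}\Big(a^2+6ab+b^2+2(a-b)^2\log\frac{b-a}4-4(a+b)^2+4(b^2-a^2)\log\frac{b-a}4\Big)\\&\quad-\frac{\alpha}{\sqrt{ab}}\Big(\frac{a+b}2-\frac{b-a}2\log\frac{b-a}4-(a+b)\big(\tfrac12+\log2-\tfrac12\log(b-a)\big)+\sqrt{ab}\log\frac{\sqrt b+\sqrt a}{\sqrt b-\sqrt a}\Big).\end{aligned}$$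
   Context: For $\alpha>0$ and $x,a>0$: $\varphi_\alpha(x,a)=x+a-\frac{2\alpha}{\sqrt{ax}}$, $\psi_\alpha(x,a)=\frac34(x-a)^2+a(x-a)+2\alpha\frac{\sqrt a}{\sqrt x}-2\alpha-2$, $E_\alpha=\{a>0:\exists x>a,\ \varphi_\alpha(x,a)\ge0,\ \psi_\alpha(x,a)=0\}$, and $a_c=\min E_\alpha$. For each $a>0$ there is a unique $x>a$ with $\psi_\alpha(x,a)=0$. *)

theory Defs
  imports "HOL-Analysis.Analysis"
begin

definition phi_alpha :: "real \<Rightarrow> real \<Rightarrow> real \<Rightarrow> real" where
  "phi_alpha \<alpha> x a = x + a - 2 * \<alpha> / sqrt (a * x)"

definition psi_alpha :: "real \<Rightarrow> real \<Rightarrow> real \<Rightarrow> real" where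
  "psi_alpha \<alpha> x a = 3/4 * (x - a)^2 + a * (x - a) + 2 * \<alpha> * (sqrt a / sqrt x) - 2 * \<alpha> - 2"

definition E_alpha :: "real \<Rightarrow> real set" where
  "E_alpha \<alpha> = {a. a > 0 \<and> (\<exists>x. x > a \<and> phi_alpha \<alpha> x a \<ge> 0 \<and> psi_alpha \<alpha> x a = 0)}"

definition a_crit :: "real \<Rightarrow> real" where
  "a_crit \<alpha> = (LEAST a. a \<in> E_alpha \<alpha>)"

definition nu_density :: "real \<Rightarrow> real \<Rightarrow> real \<Rightarrow> real \<Rightarrow> real" where
  "nu_density \<alpha> a b x =
     1 / (2 * pi) * sqrt ((b - x) / (x - a)) * (2 * x + b - a - 2 * \<alpha> * sqrt (a / b) * (1 / x))"

end

theory Submission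
  imports Defs
begin

(* Put m = (a + b)/2, r = (b - a)/2 and substitute t = m - r cos theta, theta in [0, pi].
   The density of nu then becomes a trigonometric polynomial of degree 2 plus a multiple of
   cos_geom rho theta = sum_n rho^n cos (n theta), where rho = (sqrt b - sqrt a)/(sqrt b + sqrt a),
   and for x = m - r cos p the kernel ln (1/|x - t|) becomes -(ln r + ln |cos theta - cos p|).
   The cosine coefficients of ln |cos theta - cos p| on [0, pi] are -pi ln 2 and -pi cos (n p)/n:
   they come from the series of ln |1 - r e^(iu)| for r < 1 and dominated convergence as r -> 1.
   Summed against cos_geom rho they give ln (1 - 2 rho cos p + rho^2) = ln (2 rho x / r), so the
   potential is an explicit expression in which x cancels. This holds for all 0 < a < b; the
   hypotheses on sigma and alpha only serve to guarantee 0 < a < b, which for alpha > 0 needs the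
   minimum of E_alpha to exist (a compactness argument) and psi_alpha (., a) to have a unique
   zero beyond a. *)

section \<open>Cosine series\<close>

lemma cos_quadratic_eq: "1 - 2 * r * cos u + r^2 = (1 - r)^2 + r * (2 - 2 * cos (u::real))"
  by (simp add: algebra_simps power2_eq_square)

lemma cos_quadratic_ge: "0 \<le> r \<Longrightarrow> r * (2 - 2 * cos (u::real)) \<le> 1 - 2 * r * cos u + r^2"
  unfolding cos_quadratic_eq by simp

lemma cos_quadratic_ge_sq: "0 \<le> r \<Longrightarrow> (1 - r)^2 \<le> 1 - 2 * r * cos (u::real) + r^2"
  unfolding cos_quadratic_eq by simp

lemma cos_quadratic_pos:
  assumes "0 \<le> r" "r < 1" shows "0 < 1 - 2 * r * cos (u::real) + r^2"
proof -
  have "0 \<le> r * (2 - 2 * cos u)" using assms cos_le_one[of u] by auto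
  moreover have "0 < (1 - r)^2" using assms by auto
  ultimately show ?thesis unfolding cos_quadratic_eq by linarith
qed

lemma cos_quadratic_le_4:
  assumes "0 \<le> r" "r \<le> 1" shows "1 - 2 * r * cos (u::real) + r^2 \<le> 4"
proof -
  have "r * (- cos u) \<le> r * 1" using assms cos_ge_minus_one[of u]
    by (intro mult_left_mono) auto
  moreover have "r^2 \<le> 1" using assms by (simp add: power_le_one)
  ultimately show ?thesis using assms by linarith
qed

lemma sin_mult_sin_eq: "sin (x::real) * sin x = 1 - cos x * cos x"
  using sin_squared_eq[of x] by (simp add: power2_eq_square)

lemma two_minus_two_cos_add_mult_diff:
  "(2 - 2 * cos (t + p)) * (2 - 2 * cos (t - p)) = 4 * (cos t - cos (p::real))^2"
proof -
  have "cos (t + p) * cos (t - p)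
      = cos t * cos t * (cos p * cos p) - (sin t * sin t) * (sin p * sin p)"
    by (simp add: cos_add cos_diff algebra_simps)
  also have "\<dots> = cos t * cos t - sin p * sin p"
    unfolding sin_mult_sin_eq by (simp add: algebra_simps)
  finally have prod: "cos (t + p) * cos (t - p) = cos t * cos t - sin p * sin p" .
  have sum: "cos (t + p) + cos (t - p) = 2 * cos t * cos p"
    by (simp add: cos_add cos_diff)
  have "(2 - 2 * cos (t + p)) * (2 - 2 * cos (t - p))
      = 4 - 4 * (cos (t + p) + cos (t - p)) + 4 * (cos (t + p) * cos (t - p))"
    by (simp add: algebra_simps)
  also have "\<dots> = 4 * (cos t - cos p)^2"
    unfolding prod sum sin_mult_sin_eq by (simp add: power2_eq_square algebra_simps)
  finally show ?thesis .
qed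

lemma norm_one_minus_cis_sq:
  "(cmod (1 - complex_of_real r * cis u))^2 = 1 - 2 * r * cos u + r^2"
proof -
  have "(cmod (1 - complex_of_real r * cis u))^2 = (1 - r * cos u)^2 + (r * sin u)^2"
  proof -
    have "1 - complex_of_real r * cis u = Complex (1 - r * cos u) (- (r * sin u))"
      by (simp add: complex_eq_iff cis.code)
    then show ?thesis by (simp add: cmod_power2)
  qed
  also have "\<dots> = 1 - 2 * r * cos u + r^2"
  proof -
    have "(r * sin u)^2 = r * r * (sin u * sin u)" by (simp add: power2_eq_square)
    then show ?thesis unfolding sin_mult_sin_eq by (simp add: power2_eq_square algebra_simps)
  qed
  finally show ?thesis .
qed

lemma cos_log_series:
  fixes r u :: real
  assumes "0 \<le> r" "r < 1"
  shows "(\<lambda>n. r^n * cos (real n * u) / real n) sums (- ln (1 - 2 * r * cos u + r^2) / 2)"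
proof -
  define z where "z = - complex_of_real r * cis u"
  have z: "cmod z < 1" using assms by (simp add: z_def norm_mult)
  have series: "(\<lambda>n. Re (- ((-z)^n) / of_nat n)) sums Re (Ln (1 + z))"
    using sums_Re[OF Ln_series'[OF z]] .
  have coeff: "Re (- ((-z)^n) / of_nat n) = - (r^n * cos (real n * u) / real n)" for n
    by (simp add: z_def power_mult_distrib cos_n_Re_cis_pow_n)
  have "1 + z \<noteq> 0" using z by (metis add_eq_0_iff norm_minus_cancel norm_one order_less_irrefl)
  moreover have "cmod (1 + z) = sqrt (1 - 2 * r * cos u + r^2)"
    using norm_one_minus_cis_sq[of r u] by (simp add: z_def real_sqrt_unique)
  ultimately have sum: "Re (Ln (1 + z)) = ln (1 - 2 * r * cos u + r^2) / 2"
    using cos_quadratic_pos[OF assms, of u] by (simp add: ln_sqrt)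
  from series have "(\<lambda>n. - (r^n * cos (real n * u) / real n)) sums (ln (1 - 2 * r * cos u + r^2) / 2)"
    unfolding coeff sum .
  then show ?thesis using sums_minus by fastforce
qed

definition cos_geom :: "real \<Rightarrow> real \<Rightarrow> real" where
  "cos_geom w t = (1 - w * cos t) / (1 - 2 * w * cos t + w^2)"

lemma cos_geom_sums:
  fixes w t :: real
  assumes "0 \<le> w" "w < 1"
  shows "(\<lambda>n. w^n * cos (real n * t)) sums cos_geom w t"
proof -
  define z where "z = complex_of_real w * cis t"
  have z: "norm z < 1" using assms by (simp add: z_def norm_mult)
  have "(\<lambda>n. Re (z^n)) sums Re (1 / (1 - z))" using sums_Re[OF geometric_sums[OF z]] .
  moreover have "Re (z^n) = w^n * cos (real n * t)" for n
    by (simp add: z_def power_mult_distrib cos_n_Re_cis_pow_n)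
  moreover have "Re (1 / (1 - z)) = cos_geom w t"
  proof -
    have "Re (1 / (1 - z)) = Re (1 - z) / (cmod (1 - z))^2"
      by (simp add: Re_divide cmod_power2)
    also have "Re (1 - z) = 1 - w * cos t" by (simp add: z_def cis.code)
    also have "(cmod (1 - z))^2 = 1 - 2 * w * cos t + w^2"
      using norm_one_minus_cis_sq[of w t] by (simp add: z_def)
    finally show ?thesis unfolding cos_geom_def .
  qed
  ultimately show ?thesis by simp
qed

lemma cos_geom_bound:
  assumes "0 \<le> w" "w < 1" shows "\<bar>cos_geom w t\<bar> \<le> 2 / (1 - w)^2"
proof -
  have d: "(1 - w)^2 \<le> 1 - 2 * w * cos t + w^2" by (rule cos_quadratic_ge_sq) fact
  have d0: "0 < (1 - w)^2" using assms by simp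
  have "\<bar>w * cos t\<bar> \<le> 1" using assms by (simp add: abs_mult mult_le_one)
  then have n: "\<bar>1 - w * cos t\<bar> \<le> 2" by linarith
  have dp: "0 < 1 - 2 * w * cos t + w^2" using d d0 by linarith
  have "\<bar>cos_geom w t\<bar> = \<bar>1 - w * cos t\<bar> / (1 - 2 * w * cos t + w^2)"
    unfolding cos_geom_def abs_divide abs_of_pos[OF dp] ..
  also have "\<dots> \<le> 2 / (1 - w)^2" using n d d0 by (intro frac_le) auto
  finally show ?thesis .
qed

lemma cos_geom_continuous_on: "0 \<le> w \<Longrightarrow> w < 1 \<Longrightarrow> continuous_on S (cos_geom w)"
  unfolding cos_geom_def using cos_quadratic_pos
  by (intro continuous_intros) (metis less_irrefl)

lemma cos_geom_measurable[measurable]: "cos_geom w \<in> borel_measurable borel"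
  unfolding cos_geom_def by measurable

lemma integral_cos_mult_0_pi:
  "(LBINT t:{0..pi}. cos (real m * t)) = (if m = 0 then pi else 0)"
proof (cases "m = 0")
  case False
  have "(LBINT t:{0..pi}. cos (real m * t)) = (\<integral>t. cos (real m * t) * indicator {0..pi} t \<partial>lborel)"
    by (simp add: set_lebesgue_integral_def mult.commute)
  also have "\<dots> = sin (real m * pi) / real m - sin (real m * 0) / real m"
    using False by (intro integral_FTC_Icc_real) (auto intro!: derivative_eq_intros)
  finally show ?thesis using False by (simp add: mult.commute)
qed (simp add: set_integral_const)

lemma integral_cos_mult_cos_0_pi:
  "(LBINT t:{0..pi}. cos (real k * t) * cos (real n * t))
     = (if k = n then (if n = 0 then pi else pi / 2) else 0)"
proof -
  define d where "d = (if n \<le> k then k - n else n - k)"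
  have eq: "cos (real k * t) * cos (real n * t) = cos (real d * t) / 2 + cos (real (k + n) * t) / 2"
    for t
  proof -
    have "cos (real k * t - real n * t) = cos (real d * t)"
      by (metis d_def cos_minus minus_diff_eq of_nat_diff left_diff_distrib nat_le_linear)
    then show ?thesis
      by (simp add: cos_times_cos distrib_right add_divide_distrib)
  qed
  have "(LBINT t:{0..pi}. cos (real k * t) * cos (real n * t))
      = (LBINT t:{0..pi}. cos (real d * t) / 2 + cos (real (k + n) * t) / 2)"
    by (simp only: eq)
  also have "\<dots> = (LBINT t:{0..pi}. cos (real d * t)) / 2
                    + (LBINT t:{0..pi}. cos (real (k + n) * t)) / 2"
    by (subst set_integral_add) (auto intro!: borel_integrable_atLeastAtMost' continuous_intros)
  also have "\<dots> = (if k = n then (if n = 0 then pi else pi / 2) else 0)"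
    unfolding integral_cos_mult_0_pi d_def by auto
  finally show ?thesis .
qed

lemma sums_integral_geometric_bound:
  fixes f :: "nat \<Rightarrow> 'a \<Rightarrow> real"
  assumes f: "\<And>n. integrable M (f n)" and F: "integrable M F"
    and w: "0 \<le> w" "w < 1"
    and bound: "\<And>n x. \<bar>f n x\<bar> \<le> w^n * F x"
    and sums: "\<And>x. (\<lambda>n. f n x) sums s x"
  shows "(\<lambda>n. integral\<^sup>L M (f n)) sums integral\<^sup>L M s"
proof -
  have geom: "summable (\<lambda>n. w^n * c)" for c
    using w by (intro summable_mult2 summable_geometric) auto
  have "summable (\<lambda>n. norm (f n x))" for x
    using bound by (intro summable_comparison_test'[OF geom]) auto
  moreover have "summable (\<lambda>n. integral\<^sup>L M (\<lambda>x. norm (f n x)))"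
  proof (rule summable_comparison_test'[OF geom])
    fix n
    have "integral\<^sup>L M (\<lambda>x. norm (f n x)) \<le> integral\<^sup>L M (\<lambda>x. w^n * F x)"
      using bound by (intro integral_mono integrable_norm f integrable_mult_right F) auto
    then show "norm (integral\<^sup>L M (\<lambda>x. norm (f n x))) \<le> w^n * integral\<^sup>L M F"
      by simp
  qed
  ultimately have "(\<lambda>n. integral\<^sup>L M (f n)) sums integral\<^sup>L M (\<lambda>x. \<Sum>n. f n x)"
    by (intro sums_integral f AE_I2)
  moreover have "(\<lambda>x. \<Sum>n. f n x) = s" using sums by (auto intro!: sums_unique[symmetric])
  ultimately show ?thesis by simp
qed

lemma integrable_indicator_mult_continuous:
  fixes f :: "real \<Rightarrow> real"
  shows "continuous_on {a..b} f \<Longrightarrow> integrable lborel (\<lambda>t. indicator {a..b} t * f t)"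
  using borel_integrable_atLeastAtMost'[of a b f] unfolding set_integrable_def by simp

lemma integrable_mult_bounded:
  fixes f g :: "real \<Rightarrow> real"
  assumes "integrable lborel f" "g \<in> borel_measurable borel" "\<And>x. \<bar>g x\<bar> \<le> B"
  shows "integrable lborel (\<lambda>x. f x * g x)"
proof (rule Bochner_Integration.integrable_bound[OF integrable_mult_right[OF assms(1), of B]])
  show "(\<lambda>x. f x * g x) \<in> borel_measurable lborel"
    using borel_measurable_integrable[OF assms(1)] assms(2) by measurable
  have "0 \<le> B" using assms(3)[of 0] by linarith
  then show "AE x in lborel. norm (f x * g x) \<le> norm (B * f x)"
    using assms(3) by (intro AE_I2) (simp add: abs_mult mult.commute[of B] mult_left_mono)
qed

section \<open>Cosine coefficients of \<open>ln \<bar>cos t - cos p\<bar>\<close>\<close>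

definition log_cos_diff :: "real \<Rightarrow> real \<Rightarrow> real" where
  "log_cos_diff p t = ln \<bar>cos t - cos p\<bar>"

text \<open>Abel regularisation of \<open>log_cos_diff\<close>: at \<open>r = 1\<close> the product below is
  \<open>4 (cos t - cos p)\<^sup>2\<close>.\<close>
definition log_cos_diff_abel :: "real \<Rightarrow> real \<Rightarrow> real \<Rightarrow> real" where
  "log_cos_diff_abel r p t =
     ln ((1 - 2 * r * cos (t + p) + r^2) * (1 - 2 * r * cos (t - p) + r^2)) / 2 - ln 2"

lemma log_cos_diff_measurable[measurable]: "log_cos_diff p \<in> borel_measurable borel"
  unfolding log_cos_diff_def by measurable

lemma log_cos_diff_abel_measurable[measurable]: "log_cos_diff_abel r p \<in> borel_measurable borel"
  unfolding log_cos_diff_abel_def by measurable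

lemma log_cos_diff_abel_continuous_on:
  assumes "0 \<le> r" "r < 1" shows "continuous_on S (log_cos_diff_abel r p)"
proof -
  have "(1 - 2 * r * cos (t + p) + r^2) * (1 - 2 * r * cos (t - p) + r^2) \<noteq> 0" for t
    using cos_quadratic_pos[OF assms, of "t + p"] cos_quadratic_pos[OF assms, of "t - p"] by simp
  then show ?thesis unfolding log_cos_diff_abel_def by (intro continuous_intros) auto
qed

lemma log_cos_diff_abel_cos_series:
  assumes "0 \<le> r" "r < 1"
  shows "(\<lambda>k. 2 * r^k * cos (real k * p) / real k * cos (real k * t))
           sums (- log_cos_diff_abel r p t - ln 2)"
proof -
  have "(\<lambda>k. r^k * cos (real k * (t + p)) / real k + r^k * cos (real k * (t - p)) / real k) sums
        (- ln (1 - 2 * r * cos (t + p) + r^2) / 2 + - ln (1 - 2 * r * cos (t - p) + r^2) / 2)"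
    by (intro sums_add cos_log_series assms)
  moreover have "r^k * cos (real k * (t + p)) / real k + r^k * cos (real k * (t - p)) / real k
      = 2 * r^k * cos (real k * p) / real k * cos (real k * t)" for k
    by (simp add: distrib_left right_diff_distrib cos_add cos_diff add_divide_distrib[symmetric]
        algebra_simps)
  moreover have "- ln (1 - 2 * r * cos (t + p) + r^2) / 2 + - ln (1 - 2 * r * cos (t - p) + r^2) / 2
      = - log_cos_diff_abel r p t - ln 2"
  proof -
    have "ln ((1 - 2 * r * cos (t + p) + r^2) * (1 - 2 * r * cos (t - p) + r^2)) =
          ln (1 - 2 * r * cos (t + p) + r^2) + ln (1 - 2 * r * cos (t - p) + r^2)"
      using cos_quadratic_pos[OF assms, of "t + p"] cos_quadratic_pos[OF assms, of "t - p"]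
      by (simp add: ln_mult)
    then show ?thesis unfolding log_cos_diff_abel_def by linarith
  qed
  ultimately show ?thesis by simp
qed

text \<open>Termwise integration of \<open>log_cos_diff_abel_cos_series\<close>, which is dominated by
  \<open>\<Sum>k. 2 * r^k\<close>.\<close>
lemma integral_log_cos_diff_abel_series_mult_cos:
  assumes r: "0 \<le> r" "r < 1"
  shows "(LBINT t:{0..pi}. (- log_cos_diff_abel r p t - ln 2) * cos (real n * t)) =
         (if n = 0 then 0 else pi * r^n * cos (real n * p) / real n)"
proof -
  define c where "c k = 2 * cos (real k * p) / real k" for k :: nat
  define f where "f k t = indicator {0..pi} t * (r^k * (c k * (cos (real k * t) * cos (real n * t))))"
    for k t
  have "(\<lambda>k. integral\<^sup>L lborel (f k)) sums integral\<^sup>L lborel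
      (\<lambda>t. indicator {0..pi} t * ((- log_cos_diff_abel r p t - ln 2) * cos (real n * t)))"
  proof (rule sums_integral_geometric_bound[OF _ _ r])
    show "integrable lborel (f k)" for k
      unfolding f_def by (intro integrable_indicator_mult_continuous continuous_intros)
    show "integrable lborel (\<lambda>t. indicator {0..pi} t * (2::real))"
      by (intro integrable_indicator_mult_continuous continuous_intros)
    show "\<bar>f k t\<bar> \<le> r^k * (indicator {0..pi} t * 2)" for k t
    proof -
      have "\<bar>c k\<bar> \<le> 2"
      proof (cases "k = 0")
        case False
        then have "\<bar>c k\<bar> = 2 * \<bar>cos (real k * p)\<bar> / real k" by (simp add: c_def abs_mult)
        also have "\<dots> \<le> 2 * 1 / 1" using False by (intro frac_le mult_left_mono) auto
        finally show ?thesis by simp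
      qed (simp add: c_def)
      moreover have "\<bar>cos (real k * t) * cos (real n * t)\<bar> \<le> 1"
        by (simp add: abs_mult mult_le_one)
      ultimately have "\<bar>c k * (cos (real k * t) * cos (real n * t))\<bar> \<le> 2 * 1"
        unfolding abs_mult by (intro mult_mono) auto
      then have "\<bar>r^k * (c k * (cos (real k * t) * cos (real n * t)))\<bar> \<le> r^k * 2"
        using r unfolding abs_mult[of "r^k"] by (simp add: mult_left_mono)
      then show ?thesis unfolding f_def by (simp add: abs_mult indicator_def)
    qed
    show "(\<lambda>k. f k t) sums
        (indicator {0..pi} t * ((- log_cos_diff_abel r p t - ln 2) * cos (real n * t)))" for t
    proof -
      have "f k t = indicator {0..pi} t *
          (2 * r^k * cos (real k * p) / real k * cos (real k * t) * cos (real n * t))" for k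
        by (simp add: f_def c_def)
      then show ?thesis by (simp only:) (intro sums_mult sums_mult2 log_cos_diff_abel_cos_series r)
    qed
  qed
  moreover have "integral\<^sup>L lborel (f k) =
      (if k = n then r^n * (c n * (if n = 0 then pi else pi / 2)) else 0)" for k
  proof -
    have "integral\<^sup>L lborel (f k)
        = (LBINT t:{0..pi}. r^k * (c k * (cos (real k * t) * cos (real n * t))))"
      unfolding f_def set_lebesgue_integral_def by simp
    also have "\<dots> = r^k * (c k * (LBINT t:{0..pi}. cos (real k * t) * cos (real n * t)))"
      by simp
    finally show ?thesis unfolding integral_cos_mult_cos_0_pi by simp
  qed
  ultimately have "(\<lambda>k. if k = n then r^n * (c n * (if n = 0 then pi else pi / 2)) else 0) sums
      (LBINT t:{0..pi}. (- log_cos_diff_abel r p t - ln 2) * cos (real n * t))"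
    unfolding set_lebesgue_integral_def real_scaleR_def by (simp only:)
  then have "(LBINT t:{0..pi}. (- log_cos_diff_abel r p t - ln 2) * cos (real n * t))
      = r^n * (c n * (if n = 0 then pi else pi / 2))"
    using sums_single[of n "\<lambda>_. r^n * (c n * (if n = 0 then pi else pi / 2))"] sums_unique2
    by blast
  then show ?thesis unfolding c_def by auto
qed

lemma log_cos_diff_abel_fourier:
  assumes r: "0 \<le> r" "r < 1"
  shows "(LBINT t:{0..pi}. log_cos_diff_abel r p t * cos (real n * t)) =
         (if n = 0 then - pi * ln 2 else - pi * r^n * cos (real n * p) / real n)"
proof -
  have "(LBINT t:{0..pi}. log_cos_diff_abel r p t * cos (real n * t))
      = (LBINT t:{0..pi}. - ln 2 * cos (real n * t)
                           - (- log_cos_diff_abel r p t - ln 2) * cos (real n * t))"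
    by (simp add: algebra_simps)
  also have "\<dots> = (LBINT t:{0..pi}. - ln 2 * cos (real n * t))
      - (LBINT t:{0..pi}. (- log_cos_diff_abel r p t - ln 2) * cos (real n * t))"
    using log_cos_diff_abel_continuous_on[OF r]
    by (subst set_integral_diff) (auto intro!: borel_integrable_atLeastAtMost' continuous_intros)
  also have "(LBINT t:{0..pi}. - ln 2 * cos (real n * t))
      = - ln 2 * (LBINT t:{0..pi}. cos (real n * t))"
    by (rule set_integral_mult_right)
  finally show ?thesis
    unfolding integral_log_cos_diff_abel_series_mult_cos[OF r] integral_cos_mult_0_pi by auto
qed

definition abel_radius :: "nat \<Rightarrow> real" where
  "abel_radius j = 1 - 1 / (real j + 2)"

lemma abel_radius_bounds: "1/2 \<le> abel_radius j" "abel_radius j < 1" "0 \<le> abel_radius j"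
  unfolding abel_radius_def by (auto simp: field_simps)

lemma abel_radius_tendsto: "abel_radius \<longlonglongrightarrow> 1"
proof -
  have "(\<lambda>j. 1 / (real j + 2)) \<longlonglongrightarrow> 0"
    by real_asymp
  then show ?thesis unfolding abel_radius_def[abs_def] using tendsto_diff[of "\<lambda>_. 1" 1] by force
qed

lemma log_cos_diff_abel_le:
  assumes "0 \<le> r" "r < 1"
  shows "log_cos_diff_abel r p t \<le> ln 2"
proof -
  define A where "A = 1 - 2 * r * cos (t + p) + r^2"
  define B where "B = 1 - 2 * r * cos (t - p) + r^2"
  have A: "0 < A" "A \<le> 4" and B: "0 < B" "B \<le> 4"
    unfolding A_def B_def using cos_quadratic_pos[OF assms] cos_quadratic_le_4[of r] assms by auto
  have "A * B \<le> 4 * 4" using A B by (intro mult_mono) auto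
  then have "ln (A * B) \<le> ln (2 ^ 4)" using A B by (subst ln_le_cancel_iff) auto
  then show ?thesis unfolding log_cos_diff_abel_def A_def[symmetric] B_def[symmetric]
    using ln_realpow[of 2 4] by simp
qed

lemma ln_power2_abs: "x \<noteq> 0 \<Longrightarrow> ln ((x::real)^2) = 2 * ln \<bar>x\<bar>"
  using ln_realpow[of "\<bar>x\<bar>" 2] by simp

lemma log_cos_diff_abel_ge:
  assumes "1/2 \<le> r" "r < 1" "cos t \<noteq> cos p"
  shows "log_cos_diff p t - ln 2 \<le> log_cos_diff_abel r p t"
proof -
  define A where "A = 1 - 2 * r * cos (t + p) + r^2"
  define B where "B = 1 - 2 * r * cos (t - p) + r^2"
  define X where "X = r * (2 - 2 * cos (t + p))"
  define Y where "Y = r * (2 - 2 * cos (t - p))"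
  have r: "0 \<le> r" using assms by simp
  have "0 \<le> X" "0 \<le> Y"
    unfolding X_def Y_def using r cos_le_one[of "t + p"] cos_le_one[of "t - p"] by auto
  moreover have "X \<le> A" "Y \<le> B" unfolding A_def B_def X_def Y_def using cos_quadratic_ge[OF r] by auto
  ultimately have "X * Y \<le> A * B" by (intro mult_mono) auto
  moreover have "X * Y = r * r * ((2 - 2 * cos (t + p)) * (2 - 2 * cos (t - p)))"
    unfolding X_def Y_def by (simp add: algebra_simps)
  then have "X * Y = (2 * r)^2 * (cos t - cos p)^2"
    unfolding two_minus_two_cos_add_mult_diff by (simp add: power2_eq_square)
  moreover have "1 * (cos t - cos p)^2 \<le> (2 * r)^2 * (cos t - cos p)^2"
    using assms by (intro mult_right_mono one_le_power) auto
  ultimately have "(cos t - cos p)^2 \<le> A * B" by linarith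
  moreover have "0 < (cos t - cos p)^2" using assms by simp
  ultimately have "ln ((cos t - cos p)^2) \<le> ln (A * B)" by (subst ln_le_cancel_iff) linarith+
  then show ?thesis
    unfolding log_cos_diff_abel_def log_cos_diff_def A_def[symmetric] B_def[symmetric]
    using assms by (simp add: ln_power2_abs)
qed

lemma abs_log_cos_diff_abel_le:
  assumes "1/2 \<le> r" "r < 1" "cos t \<noteq> cos p"
  shows "\<bar>log_cos_diff_abel r p t\<bar> \<le> \<bar>log_cos_diff p t\<bar> + ln 2"
  using log_cos_diff_abel_ge[OF assms] log_cos_diff_abel_le[of r p t] assms by auto

lemma log_cos_diff_abel_tendsto:
  assumes "cos t \<noteq> cos p"
  shows "(\<lambda>j. log_cos_diff_abel (abel_radius j) p t) \<longlonglongrightarrow> log_cos_diff p t"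
proof -
  define P where "P r = (1 - 2 * r * cos (t + p) + r^2) * (1 - 2 * r * cos (t - p) + r^2)" for r
  have P1: "P 1 = 4 * (cos t - cos p)^2"
    unfolding P_def using two_minus_two_cos_add_mult_diff[of t p] by (simp add: algebra_simps)
  have "(\<lambda>j. ln (P (abel_radius j)) / 2 - ln 2) \<longlonglongrightarrow> ln (P 1) / 2 - ln 2"
    using P1 assms unfolding P_def by (intro tendsto_intros abel_radius_tendsto) auto
  moreover have "ln (P 1) / 2 - ln 2 = log_cos_diff p t"
    unfolding P1 log_cos_diff_def using assms ln_realpow[of 2 2]
    by (simp add: ln_mult ln_power2_abs add_divide_distrib)
  ultimately show ?thesis unfolding log_cos_diff_abel_def P_def by simp
qed

lemma log_cos_diff_le: "log_cos_diff p t \<le> ln 2"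
proof (cases "cos t = cos p")
  case False
  have "\<bar>cos t - cos p\<bar> \<le> 2" using abs_cos_le_one[of t] abs_cos_le_one[of p] by linarith
  then show ?thesis unfolding log_cos_diff_def using False by (subst ln_le_cancel_iff) auto
qed (simp add: log_cos_diff_def)

lemma AE_cos_neq:
  assumes "0 \<le> p" "p \<le> pi"
  shows "AE t in lborel. t \<in> {0..pi} \<longrightarrow> cos t \<noteq> cos p"
  using AE_lborel_singleton[of p] by eventually_elim (use cos_inj_pi[of _ p] assms in auto)

text \<open>Fatou's lemma for the nonnegative functions \<open>ln 2 - log_cos_diff_abel r p\<close>,
  whose integrals over \<open>[0, pi]\<close> all equal \<open>2 pi ln 2\<close>.\<close>
lemma log_cos_diff_integrable:
  assumes "0 \<le> p" "p \<le> pi"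
  shows "set_integrable lborel {0..pi} (log_cos_diff p)"
proof -
  define g where "g j t = indicator {0..pi} t * (ln 2 - log_cos_diff_abel (abel_radius j) p t)" for j t
  define h where "h t = indicator {0..pi} t * (ln 2 - log_cos_diff p t)" for t
  have cont: "continuous_on {0..pi} (log_cos_diff_abel (abel_radius j) p)" for j
    by (intro log_cos_diff_abel_continuous_on abel_radius_bounds)
  have "integral\<^sup>L lborel (g j) = (LBINT t:{0..pi}. ln 2 - log_cos_diff_abel (abel_radius j) p t)"
    for j unfolding g_def set_lebesgue_integral_def by simp
  also have "\<dots> j = pi * ln 2 - (LBINT t:{0..pi}. log_cos_diff_abel (abel_radius j) p t * cos (0 * t))"
    for j using cont[of j]
    by (subst set_integral_diff) (auto intro!: borel_integrable_atLeastAtMost' simp: set_integral_const)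
  also have "\<dots> j = 2 * pi * ln 2" for j
    using log_cos_diff_abel_fourier[OF abel_radius_bounds(3,2), of j p 0] by simp
  finally have "integral\<^sup>L lborel (g j) = 2 * pi * ln 2" for j .
  moreover have "integral\<^sup>N lborel (\<lambda>t. ennreal (g j t)) = ennreal (integral\<^sup>L lborel (g j))" for j
  proof (rule nn_integral_eq_integral)
    show "integrable lborel (g j)"
      unfolding g_def by (intro integrable_indicator_mult_continuous continuous_intros cont)
    show "AE t in lborel. 0 \<le> g j t"
      using log_cos_diff_abel_le[OF abel_radius_bounds(3,2), of j p]
      by (intro AE_I2) (simp add: g_def indicator_def)
  qed
  ultimately have nn_g: "integral\<^sup>N lborel (\<lambda>t. ennreal (g j t)) = ennreal (2 * pi * ln 2)" for j
    by simp
  have "AE t in lborel. (\<lambda>j. ennreal (g j t)) \<longlonglongrightarrow> ennreal (h t)"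
    using AE_cos_neq[OF assms] unfolding g_def h_def
    by eventually_elim (auto intro!: tendsto_intros log_cos_diff_abel_tendsto split: split_indicator)
  then have "integral\<^sup>N lborel h = (\<integral>\<^sup>+ t. liminf (\<lambda>j. ennreal (g j t)) \<partial>lborel)"
    by (intro nn_integral_cong_AE) (auto elim!: eventually_mono simp: lim_imp_Liminf)
  also have "\<dots> \<le> liminf (\<lambda>j. integral\<^sup>N lborel (\<lambda>t. ennreal (g j t)))"
    by (rule nn_integral_liminf) (unfold g_def, measurable)
  also have "\<dots> = ennreal (2 * pi * ln 2)" unfolding nn_g by (simp add: Liminf_const)
  finally have "integral\<^sup>N lborel h < \<infinity>" by (simp add: order_le_less_trans)
  moreover have "AE t in lborel. 0 \<le> h t"
    using log_cos_diff_le[of p] by (intro AE_I2) (simp add: h_def indicator_def)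
  moreover have "h \<in> borel_measurable lborel" unfolding h_def by measurable
  ultimately have "integrable lborel h"
    by (intro integrableI_nonneg) auto
  then have "integrable lborel (\<lambda>t. indicator {0..pi} t * ln 2 - h t)"
    by (intro Bochner_Integration.integrable_diff integrable_indicator_mult_continuous continuous_intros)
  then show ?thesis unfolding h_def set_integrable_def by (simp add: algebra_simps)
qed

text \<open>Let \<open>r \<rightarrow> 1\<close> in \<open>log_cos_diff_abel_fourier\<close>, by dominated convergence.\<close>
lemma log_cos_diff_fourier:
  assumes "0 \<le> p" "p \<le> pi"
  shows "(LBINT t:{0..pi}. log_cos_diff p t * cos (real n * t)) =
         (if n = 0 then - pi * ln 2 else - pi * cos (real n * p) / real n)"
proof -
  define s where
    "s j t = indicator {0..pi} t * (log_cos_diff_abel (abel_radius j) p t * cos (real n * t))" for j t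
  define f where "f t = indicator {0..pi} t * (log_cos_diff p t * cos (real n * t))" for t
  define w where "w t = indicator {0..pi} t * \<bar>log_cos_diff p t\<bar> + indicator {0..pi} t * ln 2" for t
  have w: "integrable lborel w" unfolding w_def
  proof (intro Bochner_Integration.integrable_add)
    show "integrable lborel (\<lambda>t. indicator {0..pi} t * \<bar>log_cos_diff p t\<bar>)"
      using integrable_abs[OF log_cos_diff_integrable[OF assms, unfolded set_integrable_def]]
      by (simp add: abs_mult)
  qed (auto intro!: integrable_indicator_mult_continuous continuous_intros)
  have lim: "AE t in lborel. (\<lambda>j. s j t) \<longlonglongrightarrow> f t"
    using AE_cos_neq[OF assms] unfolding s_def f_def
    by eventually_elim (auto intro!: tendsto_intros log_cos_diff_abel_tendsto split: split_indicator)
  have bound: "AE t in lborel. norm (s j t) \<le> w t" for j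
    using AE_cos_neq[OF assms]
  proof eventually_elim
    case (elim t)
    show ?case
    proof (cases "t \<in> {0..pi}")
      case True
      have "\<bar>log_cos_diff_abel (abel_radius j) p t * cos (real n * t)\<bar>
          \<le> \<bar>log_cos_diff_abel (abel_radius j) p t\<bar>"
        by (simp add: abs_mult mult_left_le)
      also have "\<dots> \<le> \<bar>log_cos_diff p t\<bar> + ln 2"
        using abs_log_cos_diff_abel_le[OF abel_radius_bounds(1,2)] elim True by simp
      finally show ?thesis using True unfolding s_def w_def by simp
    qed (simp add: s_def w_def)
  qed
  have "(\<lambda>j. integral\<^sup>L lborel (s j)) \<longlonglongrightarrow> integral\<^sup>L lborel f"
    by (rule integral_dominated_convergence[OF _ _ w lim bound]) (unfold s_def f_def, measurable)+
  then have "(\<lambda>j. integral\<^sup>L lborel (s j)) \<longlonglongrightarrow> (LBINT t:{0..pi}. log_cos_diff p t * cos (real n * t))"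
    unfolding f_def set_lebesgue_integral_def by simp
  moreover have "integral\<^sup>L lborel (s j) =
      (if n = 0 then - pi * ln 2 else - pi * abel_radius j ^ n * cos (real n * p) / real n)" for j
    unfolding s_def using log_cos_diff_abel_fourier[OF abel_radius_bounds(3,2), of j p n]
    by (simp add: set_lebesgue_integral_def)
  then have "(\<lambda>j. integral\<^sup>L lborel (s j)) \<longlonglongrightarrow>
      (if n = 0 then - pi * ln 2 else - pi * 1 ^ n * cos (real n * p) / real n)"
    using tendsto_mult_left[OF tendsto_power[OF abel_radius_tendsto, of n], of pi]
    by (cases "n = 0") (auto intro!: tendsto_intros)
  ultimately show ?thesis using LIMSEQ_unique by fastforce
qed

lemma set_integrable_log_cos_diff_mult:
  assumes "0 \<le> p" "p \<le> pi" "h \<in> borel_measurable borel" "\<And>t. \<bar>h t\<bar> \<le> B"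
  shows "set_integrable lborel {0..pi} (\<lambda>t. log_cos_diff p t * h t)"
  using integrable_mult_bounded[OF log_cos_diff_integrable[OF assms(1,2), unfolded set_integrable_def]
      assms(3,4)]
  unfolding set_integrable_def by (simp add: mult_ac)

lemma set_integral_mult_cos_geom_sums:
  assumes w: "0 \<le> w" "w < 1" and W: "set_integrable lborel {0..pi} W"
  shows "(\<lambda>n. w^n * (LBINT t:{0..pi}. W t * cos (real n * t)))
           sums (LBINT t:{0..pi}. W t * cos_geom w t)"
proof -
  define F where "F t = indicator {0..pi} t * W t" for t
  have F: "integrable lborel F"
    using W unfolding set_integrable_def F_def by simp
  have "(\<lambda>n. integral\<^sup>L lborel (\<lambda>t. w^n * (F t * cos (real n * t)))) sums
      integral\<^sup>L lborel (\<lambda>t. F t * cos_geom w t)"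
  proof (rule sums_integral_geometric_bound[OF _ _ w])
    show "integrable lborel (\<lambda>t. w^n * (F t * cos (real n * t)))" for n
      by (intro integrable_mult_right integrable_mult_bounded[OF F, of _ 1]) auto
    show "integrable lborel (\<lambda>t. \<bar>F t\<bar>)" using F by simp
    show "\<bar>w^n * (F t * cos (real n * t))\<bar> \<le> w^n * \<bar>F t\<bar>" for n t
      using w by (simp add: abs_mult mult_left_mono mult_left_le)
    show "(\<lambda>n. w^n * (F t * cos (real n * t))) sums (F t * cos_geom w t)" for t
      using sums_mult[OF cos_geom_sums[OF w, of t], of "F t"] by (simp add: mult_ac)
  qed
  then show ?thesis unfolding set_lebesgue_integral_def F_def integral_mult_right_zero
    by (simp add: mult_ac)
qed

lemma integral_cos_geom:
  assumes "0 \<le> w" "w < 1"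
  shows "(LBINT t:{0..pi}. cos_geom w t) = pi"
proof -
  have "(\<lambda>n. w^n * (LBINT t:{0..pi}. 1 * cos (real n * t))) sums (LBINT t:{0..pi}. 1 * cos_geom w t)"
    using assms by (intro set_integral_mult_cos_geom_sums borel_integrable_atLeastAtMost') auto
  then have "(\<lambda>n. if n = 0 then pi else 0) sums (LBINT t:{0..pi}. cos_geom w t)"
    unfolding mult_1 integral_cos_mult_0_pi by (simp add: if_distrib cong: if_cong)
  then show ?thesis using sums_single[of 0 "\<lambda>_. pi"] sums_unique2 by fastforce
qed

lemma integral_log_cos_diff_mult_cos_geom:
  assumes p: "0 \<le> p" "p \<le> pi" and w: "0 \<le> w" "w < 1"
  shows "(LBINT t:{0..pi}. log_cos_diff p t * cos_geom w t)
           = pi * ln (1 - 2 * w * cos p + w^2) / 2 - pi * ln 2"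
proof -
  have "(\<lambda>n. w^n * (LBINT t:{0..pi}. log_cos_diff p t * cos (real n * t))) sums
      (LBINT t:{0..pi}. log_cos_diff p t * cos_geom w t)"
    by (rule set_integral_mult_cos_geom_sums[OF w log_cos_diff_integrable[OF p]])
  moreover have "w^n * (LBINT t:{0..pi}. log_cos_diff p t * cos (real n * t)) =
      - pi * (w^n * cos (real n * p) / real n) + (if n = 0 then - pi * ln 2 else 0)" for n
    unfolding log_cos_diff_fourier[OF p] by auto
  moreover have "(\<lambda>n. - pi * (w^n * cos (real n * p) / real n) + (if n = 0 then - pi * ln 2 else 0))
      sums (- pi * (- ln (1 - 2 * w * cos p + w^2) / 2) + - pi * ln 2)"
    by (intro sums_add sums_mult cos_log_series w) (use sums_single[of 0 "\<lambda>_. - pi * ln 2"] in simp)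
  ultimately show ?thesis using sums_unique2 by fastforce
qed

lemma set_integral_log_cos_diff_combination:
  assumes p: "0 \<le> p" "p \<le> pi" and w: "0 \<le> w" "w < 1"
  shows "set_integrable lborel {0..pi}
           (\<lambda>t. (c0 + log_cos_diff p t) * (A + B * cos t + C * cos (2 * t) + D * cos_geom w t))"
    (is "set_integrable _ _ ?f")
  and "(LBINT t:{0..pi}. (c0 + log_cos_diff p t) * (A + B * cos t + C * cos (2 * t) + D * cos_geom w t))
        = c0 * (A + D) * pi - A * pi * ln 2 - B * pi * cos p - C * pi * cos (2 * p) / 2
          + D * (pi * ln (1 - 2 * w * cos p + w^2) / 2 - pi * ln 2)"
proof -
  have cont: "set_integrable lborel {0..pi} (\<lambda>_. c0 * A)" "set_integrable lborel {0..pi} cos"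
    "set_integrable lborel {0..pi} (\<lambda>t. cos (2 * t))" "set_integrable lborel {0..pi} (cos_geom w)"
    by (auto intro!: borel_integrable_atLeastAtMost' continuous_intros cos_geom_continuous_on w)
  have log: "set_integrable lborel {0..pi} (log_cos_diff p)"
    "set_integrable lborel {0..pi} (\<lambda>t. log_cos_diff p t * cos t)"
    "set_integrable lborel {0..pi} (\<lambda>t. log_cos_diff p t * cos (2 * t))"
    "set_integrable lborel {0..pi} (\<lambda>t. log_cos_diff p t * cos_geom w t)"
    by (rule log_cos_diff_integrable[OF p],
        (rule set_integrable_log_cos_diff_mult[OF p, where B = 1]; simp)+,
        rule set_integrable_log_cos_diff_mult[OF p cos_geom_measurable cos_geom_bound[OF w]])
  have eq: "?f t = c0 * A + c0 * B * cos t + c0 * C * cos (2 * t) + c0 * D * cos_geom w t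
      + A * log_cos_diff p t + B * (log_cos_diff p t * cos t) + C * (log_cos_diff p t * cos (2 * t))
      + D * (log_cos_diff p t * cos_geom w t)" for t
    by (simp add: algebra_simps)
  show "set_integrable lborel {0..pi} ?f"
    unfolding eq using cont log by (simp add: mult.assoc)
  have "(LBINT t:{0..pi}. ?f t) = c0 * A * pi + c0 * B * (LBINT t:{0..pi}. cos t)
      + c0 * C * (LBINT t:{0..pi}. cos (2 * t)) + c0 * D * (LBINT t:{0..pi}. cos_geom w t)
      + A * (LBINT t:{0..pi}. log_cos_diff p t) + B * (LBINT t:{0..pi}. log_cos_diff p t * cos t)
      + C * (LBINT t:{0..pi}. log_cos_diff p t * cos (2 * t))
      + D * (LBINT t:{0..pi}. log_cos_diff p t * cos_geom w t)"
    unfolding eq using cont log by (simp add: mult.assoc set_integral_const)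
  also have "\<dots> = c0 * (A + D) * pi - A * pi * ln 2 - B * pi * cos p - C * pi * cos (2 * p) / 2
          + D * (pi * ln (1 - 2 * w * cos p + w^2) / 2 - pi * ln 2)"
  proof -
    have "(LBINT t:{0..pi}. cos t) = 0" "(LBINT t:{0..pi}. cos (2 * t)) = 0"
      using integral_cos_mult_0_pi[of 1] integral_cos_mult_0_pi[of 2] by simp_all
    moreover have "(LBINT t:{0..pi}. log_cos_diff p t) = - pi * ln 2"
      "(LBINT t:{0..pi}. log_cos_diff p t * cos t) = - pi * cos p"
      "(LBINT t:{0..pi}. log_cos_diff p t * cos (2 * t)) = - pi * cos (2 * p) / 2"
      using log_cos_diff_fourier[OF p, of 0] log_cos_diff_fourier[OF p, of 1]
        log_cos_diff_fourier[OF p, of 2] by simp_all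
    ultimately show ?thesis
      unfolding integral_cos_geom[OF w] integral_log_cos_diff_mult_cos_geom[OF p w]
      by (simp only:) (simp add: algebra_simps)
  qed
  finally show "(LBINT t:{0..pi}. ?f t) = c0 * (A + D) * pi - A * pi * ln 2 - B * pi * cos p
      - C * pi * cos (2 * p) / 2 + D * (pi * ln (1 - 2 * w * cos p + w^2) / 2 - pi * ln 2)" .
qed

section \<open>The substitution \<open>t = (a + b) / 2 - (b - a) / 2 * cos theta\<close>\<close>

lemma set_integral_pullback:
  fixes F g g' G :: "real \<Rightarrow> real"
  assumes F[measurable]: "F \<in> borel_measurable borel"
    and g: "\<And>x. (g has_real_derivative g' x) (at x)" "continuous_on {a..b} g'"
      "\<And>x. x \<in> {a..b} \<Longrightarrow> 0 \<le> g' x" "a \<le> b"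
    and G: "set_integrable lborel {a..b} G" "AE x in lborel. x \<in> {a..b} \<longrightarrow> F (g x) * g' x = G x"
  shows "set_integrable lborel {g a..g b} F" "(LBINT x:{g a..g b}. F x) = (LBINT x:{a..b}. G x)"
proof -
  have G_eq: "AE x in lborel. F (g x) * g' x * indicator {a..b} x = indicator {a..b} x * G x"
    using G(2) by eventually_elim (auto simp: indicator_def)
  have "(\<integral>\<^sup>+ x. ennreal (norm (indicator {g a..g b} x *\<^sub>R F x)) \<partial>lborel)
      = (\<integral>\<^sup>+ x. ennreal (\<bar>F x\<bar> * indicator {g a..g b} x) \<partial>lborel)"
    by (intro nn_integral_cong) (auto simp: indicator_def)
  also have "\<dots> = (\<integral>\<^sup>+ x. ennreal (\<bar>F (g x)\<bar> * g' x * indicator {a..b} x) \<partial>lborel)"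
    by (rule nn_integral_substitution[OF _ g]) (simp add: set_borel_measurable_def)
  also have "\<dots> = (\<integral>\<^sup>+ x. ennreal (norm (indicator {a..b} x * G x)) \<partial>lborel)"
    using G_eq
  proof (intro nn_integral_cong_AE, eventually_elim)
    case (elim x)
    have "\<bar>F (g x)\<bar> * g' x * indicator {a..b} x = \<bar>F (g x) * g' x * indicator {a..b} x\<bar>"
      using g(3)[of x] by (cases "x \<in> {a..b}") (auto simp: abs_mult)
    then show ?case unfolding elim by simp
  qed
  also have "\<dots> < \<infinity>"
    using G(1) unfolding set_integrable_def integrable_iff_bounded by simp
  finally show int_F: "set_integrable lborel {g a..g b} F"
    unfolding set_integrable_def integrable_iff_bounded by auto
  have "(LBINT x. F x * indicator {g a..g b} x) = (LBINT x. F (g x) * g' x * indicator {a..b} x)"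
    by (rule integral_substitution(2)[OF int_F g])
  also have "\<dots> = (LBINT x. indicator {a..b} x * G x)"
  proof (rule integral_cong_AE)
    show "(\<lambda>x. F (g x) * g' x * indicator {a..b} x) \<in> borel_measurable lborel"
      using integral_substitution(1)[OF int_F g, unfolded set_integrable_def]
      by (simp add: borel_measurable_integrable mult.commute)
    show "(\<lambda>x. indicator {a..b} x * G x) \<in> borel_measurable lborel"
      using borel_measurable_integrable[OF G(1)[unfolded set_integrable_def]] by simp
  qed (rule G_eq)
  finally show "(LBINT x:{g a..g b}. F x) = (LBINT x:{a..b}. G x)"
    unfolding set_lebesgue_integral_def by (simp add: mult.commute)
qed

lemma log_potential_cos_substitution:
  fixes \<nu> g :: "real \<Rightarrow> real"
  assumes r: "0 < r" and p: "0 \<le> p" "p \<le> pi" and \<nu>: "\<nu> \<in> borel_measurable borel"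
    and g: "\<And>t. 0 < t \<Longrightarrow> t < pi \<Longrightarrow> \<nu> (m - r * cos t) * (r * sin t) = g t"
    and int: "set_integrable lborel {0..pi} (\<lambda>t. (ln r + log_cos_diff p t) * g t)"
  shows "(LBINT y:{m - r..m + r}. ln (1 / \<bar>m - r * cos p - y\<bar>) * \<nu> y)
           = - (LBINT t:{0..pi}. (ln r + log_cos_diff p t) * g t)"
proof -
  define F where "F y = ln (1 / \<bar>m - r * cos p - y\<bar>) * \<nu> y" for y
  have pullback: "F (m - r * cos t) * (r * sin t) = - ((ln r + log_cos_diff p t) * g t)"
    if t: "0 < t" "t < pi" "t \<noteq> p" for t
  proof -
    have "cos t \<noteq> cos p" using cos_inj_pi[of t p] t p by auto
    moreover have "m - r * cos p - (m - r * cos t) = r * (cos t - cos p)" by (simp add: algebra_simps)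
    ultimately have "ln (1 / \<bar>m - r * cos p - (m - r * cos t)\<bar>) = - (ln r + log_cos_diff p t)"
      unfolding log_cos_diff_def using r by (simp add: abs_mult ln_div ln_mult)
    then show ?thesis unfolding F_def g[OF t(1,2), symmetric] by (metis minus_mult_left mult.assoc)
  qed
  have "(LBINT y:{m - r * cos 0..m - r * cos pi}. F y)
      = (LBINT t:{0..pi}. - ((ln r + log_cos_diff p t) * g t))"
  proof (rule set_integral_pullback(2))
    show "F \<in> borel_measurable borel" unfolding F_def using \<nu> by measurable
    show "set_integrable lborel {0..pi} (\<lambda>t. - ((ln r + log_cos_diff p t) * g t))"
      using set_integrable_mult_right[of "-1", OF int] by simp
    show "AE t in lborel. t \<in> {0..pi} \<longrightarrow>
        F (m - r * cos t) * (r * sin t) = - ((ln r + log_cos_diff p t) * g t)"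
      using AE_lborel_singleton[of 0] AE_lborel_singleton[of pi] AE_lborel_singleton[of p]
      by eventually_elim (auto intro: pullback)
  qed (use r in \<open>auto intro!: derivative_eq_intros continuous_intros mult_nonneg_nonneg sin_ge_zero\<close>)
  also have "\<dots> = - (LBINT t:{0..pi}. (ln r + log_cos_diff p t) * g t)"
    using int by (rule set_integral_uminus)
  finally show ?thesis unfolding F_def by simp
qed

lemma cos_quadratic_sqrt_ratio:
  fixes a b u :: real
  assumes "0 < a" "a < b"
  defines "\<rho> \<equiv> (sqrt b - sqrt a) / (sqrt b + sqrt a)"
  shows "1 - 2 * \<rho> * cos u + \<rho>^2 = 2 * \<rho> * ((a + b) / 2 - (b - a) / 2 * cos u) / ((b - a) / 2)"
proof -
  define A where "A = sqrt a"
  define B where "B = sqrt b"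
  define m where "m = (a + b) / 2"
  define r where "r = (b - a) / 2"
  have AB: "0 < A" "A < B" unfolding A_def B_def using assms by auto
  have a: "a = A^2" and b: "b = B^2" unfolding A_def B_def using assms by auto
  have BA: "B - A \<noteq> 0" "B + A \<noteq> 0" using AB by auto
  have h: "\<rho> * (B + A) = B - A" unfolding \<rho>_def A_def[symmetric] B_def[symmetric] using BA by simp
  have key: "((B + A)^2 + (B - A)^2) * r = 2 * (B - A) * (B + A) * m"
    unfolding m_def r_def a b by (simp add: field_simps power2_eq_square)
  have "(B + A)^2 * ((1 + \<rho>^2) * r) = ((B + A)^2 + (\<rho> * (B + A))^2) * r"
    by (simp add: algebra_simps power2_eq_square)
  also have "\<dots> = 2 * (B - A) * (B + A) * m" unfolding h key ..
  also have "\<dots> = 2 * (B + A) * (\<rho> * (B + A)) * m" unfolding h by (simp only: mult_ac)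
  also have "\<dots> = (B + A)^2 * (2 * \<rho> * m)" by (simp add: algebra_simps power2_eq_square)
  finally have "(1 + \<rho>^2) * r = 2 * \<rho> * m" using BA by simp
  moreover have "0 < r" unfolding r_def using assms by simp
  ultimately show ?thesis unfolding m_def[symmetric] r_def[symmetric] by (simp add: field_simps)
qed

lemma nu_density_measurable[measurable]: "(\<lambda>t. nu_density al a b t) \<in> borel_measurable borel"
  unfolding nu_density_def by measurable

text \<open>The pole term \<open>-2 al sqrt (a / b) / x\<close> of \<open>nu_density\<close>, in the angle variable.\<close>
lemma nu_pole_term_eq:
  fixes A B c :: real
  assumes AB: "0 < A" "A < B" and c: "c < 1"
  defines "m \<equiv> (A^2 + B^2) / 2" and "r \<equiv> (B^2 - A^2) / 2" and "\<rho> \<equiv> (B - A) / (B + A)"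
  shows "- r * (1 + c) * (A / B) / (m - r * c)
           = 1 + A / B - r * (1 - \<rho> * c) / (\<rho> * (m - r * c))"
proof -
  define T where "T = m - r * c"
  have "0 < r" unfolding r_def using AB by (simp add: power_strict_mono)
  then have "r * c < r" using c by simp
  moreover have "m - r = A^2" unfolding m_def r_def by (simp add: field_simps)
  ultimately have T: "0 < T" unfolding T_def using AB zero_less_power[of A 2] by linarith
  have nonzero: "\<rho> \<noteq> 0" "B + A \<noteq> 0" "B - A \<noteq> 0" "B \<noteq> 0" unfolding \<rho>_def using AB by auto
  have "r / \<rho> = (B + A)^2 / 2"
    unfolding r_def \<rho>_def using nonzero by (simp add: field_simps power2_eq_square)
  moreover have "r * (1 - \<rho> * c) / (\<rho> * T) = (r / \<rho> - r * c) / T"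
    using nonzero by (simp add: field_simps)
  moreover have "- r * (1 + c) * A = (B + A) * T - B * (B + A)^2 / 2 + B * r * c"
    unfolding T_def m_def r_def by (simp add: field_simps power2_eq_square)
  then have "- r * (1 + c) * (A / B) / T = 1 + A / B - ((B + A)^2 / 2 - r * c) / T"
    using T nonzero by (simp add: field_simps)
  ultimately show ?thesis unfolding T_def by simp
qed

lemma sqrt_one_plus_cos_div_one_minus_cos:
  assumes "0 < t" "t < pi"
  shows "sqrt ((1 + cos t) / (1 - cos t)) = (1 + cos t) / sin t"
proof -
  have c: "cos t < 1" "-1 < cos t"
    using assms cos_monotone_0_pi[of 0 t] cos_monotone_0_pi[of t pi] by auto
  have "sin t ^ 2 = (1 - cos t) * (1 + cos t)"
    by (simp add: sin_squared_eq power2_eq_square algebra_simps)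
  then have "((1 + cos t) / sin t)^2 = (1 + cos t) * (1 + cos t) / ((1 - cos t) * (1 + cos t))"
    by (simp add: power_divide power2_eq_square)
  also have "\<dots> = (1 + cos t) / (1 - cos t)" using c by simp
  finally show ?thesis
    using c sin_gt_zero[OF assms] by (intro real_sqrt_unique) auto
qed

lemma nu_density_cos_pullback:
  fixes al a b t :: real
  assumes ab: "0 < a" "a < b" and t: "0 < t" "t < pi"
  defines "m \<equiv> (a + b) / 2" and "r \<equiv> (b - a) / 2" and "\<rho> \<equiv> (sqrt b - sqrt a) / (sqrt b + sqrt a)"
  shows "nu_density al a b (m - r * cos t) * (r * sin t) =
     r / (2 * pi) * (2 * b - r + 2 * m * cos t - r * cos (2 * t))
     + al / pi * (1 + sqrt a / sqrt b - 2 * cos_geom \<rho> t)"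
proof -
  define A where "A = sqrt a"
  define B where "B = sqrt b"
  have AB: "0 < A" "A < B" unfolding A_def B_def using ab by auto
  have a: "a = A^2" and b: "b = B^2" unfolding A_def B_def using ab by auto
  define c where "c = cos t"
  define s where "s = sin t"
  define T where "T = m - r * c"
  have s0: "0 < s" unfolding s_def using t by (simp add: sin_gt_zero)
  have c1: "c < 1" "-1 < c"
    unfolding c_def using t cos_monotone_0_pi[of 0 t] cos_monotone_0_pi[of t pi] by auto
  have r: "0 < r" unfolding r_def using ab by simp
  have "r * c < r" using r c1 by simp
  moreover have "m - r = a" unfolding m_def r_def by (simp add: field_simps)
  ultimately have T: "0 < T" unfolding T_def using ab by linarith
  have "b - T = r * (1 + c)" "T - a = r * (1 - c)"
    unfolding T_def m_def r_def by (simp_all add: field_simps)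
  then have sqrt_ratio: "sqrt ((b - T) / (T - a)) = (1 + c) / s"
    using r sqrt_one_plus_cos_div_one_minus_cos[OF t] unfolding c_def s_def by simp
  have "sqrt (a / b) = A / B" unfolding A_def B_def by (simp add: real_sqrt_divide)
  then have "nu_density al a b (m - r * cos t) * (r * sin t)
      = 1 / (2 * pi) * ((1 + c) / s) * (2 * T + b - a - 2 * al * (A / B) * (1 / T)) * (r * s)"
    unfolding nu_density_def c_def[symmetric] s_def[symmetric] T_def[symmetric] sqrt_ratio by simp
  also have "\<dots> = r / (2 * pi) * ((1 + c) * (2 * T + 2 * r)) + al / pi * (- r * (1 + c) * (A / B) / T)"
    using s0 T AB unfolding r_def by (simp add: field_simps)
  also have "(1 + c) * (2 * T + 2 * r) = 2 * b - r + 2 * m * c - r * (2 * c^2 - 1)"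
    unfolding T_def m_def r_def by (simp add: field_simps power2_eq_square)
  also have "- r * (1 + c) * (A / B) / T = 1 + A / B - r * (1 - \<rho> * c) / (\<rho> * T)"
    using nu_pole_term_eq[OF AB c1(1)]
    unfolding T_def m_def r_def \<rho>_def A_def[symmetric] B_def[symmetric] unfolding a b .
  also have "r * (1 - \<rho> * c) / (\<rho> * T) = 2 * cos_geom \<rho> t"
  proof -
    have "\<rho> \<noteq> 0" unfolding \<rho>_def A_def[symmetric] B_def[symmetric] using AB by simp
    moreover have denom: "1 - 2 * \<rho> * c + \<rho>^2 = 2 * \<rho> * T / r"
      using cos_quadratic_sqrt_ratio[OF ab, of t] unfolding \<rho>_def m_def r_def T_def c_def .
    ultimately show ?thesis
      unfolding cos_geom_def c_def[symmetric] denom using r T by (simp add: field_simps)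
  qed
  finally show ?thesis unfolding cos_double_cos A_def B_def c_def .
qed

section \<open>The potential of \<open>nu\<close>\<close>

lemma nu_potential_algebra:
  fixes A B al x L2 Lr Lp Lx a b :: real
  assumes AB: "0 < A" "A < B" and a: "a = A^2" and b: "b = B^2"
  defines "m \<equiv> (a + b) / 2" and "r \<equiv> (b - a) / 2"
  defines "c \<equiv> (m - x) / r"
  defines "P0 \<equiv> r / (2 * pi) * (2 * b - r) + al / pi * (1 + A / B)" and "P1 \<equiv> r * m / pi"
    and "P2 \<equiv> - (r^2 / (2 * pi))" and "P3 \<equiv> - 2 * al / pi"
  assumes ln_diff: "ln (b - a) = Lr + L2" and ln_quarter: "ln ((b - a) / 4) = Lr - L2"
    and ln_rho: "ln ((B + A) / (B - A)) = - Lp"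
  shows "- (Lr * (P0 + P3) * pi - P0 * pi * L2 - P1 * pi * c - P2 * pi * (2 * c^2 - 1) / 2
            + P3 * (pi * (L2 + Lp + Lx - Lr) / 2 - pi * L2))
         + 1/2 * (x^2 + 2 * al * (- Lx))
     = - 1/16 * (a^2 + 6*a*b + b^2 + 2 * (a - b)^2 * ln ((b - a) / 4) - 4 * (a + b)^2
                 + 4 * (b^2 - a^2) * ln ((b - a) / 4))
       - al / (A * B) * ((a + b) / 2 - (b - a) / 2 * ln ((b - a) / 4)
                 - (a + b) * (1/2 + L2 - 1/2 * ln (b - a))
                 + (A * B) * ln ((B + A) / (B - A)))"
    (is "?L = ?R")
proof -
  have r0: "r \<noteq> 0" unfolding r_def a b using AB by (simp add: power_strict_mono)
  have B0: "B \<noteq> 0" "A \<noteq> 0" using AB by auto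
  define k where "k = A / B"
  define N where "N = - (r * (2 * b - r) / 2) * (Lr - L2) + m^2/2 + r^2/4 + al * (Lp - k * (Lr - L2))"
  have c_sq: "r * m * c - r^2 * (2 * c^2 - 1) / 4 = m^2/2 + r^2/4 - x^2/2"
    unfolding c_def using r0 by (simp add: field_simps power2_eq_square)
  have "?L = - Lr * (r * (2 * b - r) / 2 + al * k - al) + (r * (2 * b - r) / 2 + al * (1 + k)) * L2
       + (r * m * c - r^2 * (2 * c^2 - 1) / 4) + al * (Lp + Lx - Lr - L2) + x^2/2 - al * Lx"
    unfolding P0_def P1_def P2_def P3_def k_def[symmetric] by (simp add: field_simps power2_eq_square)
  also have "\<dots> = N" unfolding c_sq N_def by (simp add: field_simps)
  finally have LN: "?L = N" .
  have a_AB: "a / (A * B) = k" unfolding a k_def using B0 by (simp add: power2_eq_square)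
  have "?R = - 1/16 * (a^2 + 6*a*b + b^2 - 4 * (a + b)^2
                        + (2 * (a - b)^2 + 4 * (b^2 - a^2)) * (Lr - L2))
       - al * (a / (A * B)) * (Lr - L2) + al * Lp"
    unfolding ln_diff ln_quarter ln_rho using B0 by (simp add: field_simps)
  also have "\<dots> = N" unfolding a_AB N_def m_def r_def using B0
    by (simp add: field_simps power2_eq_square)
  finally show ?thesis using LN by simp
qed

lemma nu_potential_eq:
  fixes al a b x :: real
  assumes ab: "0 < a" "a < b" and x: "a < x" "x \<le> b"
  shows "(LINT t:{a<..b}|lborel. ln (1 / \<bar>x - t\<bar>) * nu_density al a b t)
       + 1/2 * (x^2 + 2 * al * ln (1 / x))
     = - 1/16 * (a^2 + 6*a*b + b^2 + 2 * (a - b)^2 * ln ((b - a) / 4) - 4 * (a + b)^2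
                 + 4 * (b^2 - a^2) * ln ((b - a) / 4))
       - al / sqrt (a * b) * ((a + b) / 2 - (b - a) / 2 * ln ((b - a) / 4)
                 - (a + b) * (1/2 + ln 2 - 1/2 * ln (b - a))
                 + sqrt (a * b) * ln ((sqrt b + sqrt a) / (sqrt b - sqrt a)))"
proof -
  define m where "m = (a + b) / 2"
  define r where "r = (b - a) / 2"
  define \<rho> where "\<rho> = (sqrt b - sqrt a) / (sqrt b + sqrt a)"
  have r: "0 < r" unfolding r_def using ab by simp
  have "0 < (B - A) / (B + A) \<and> (B - A) / (B + A) < 1" if "0 < A" "A < B" for A B :: real
    using that by (auto simp: field_simps)
  from this[of "sqrt a" "sqrt b"] have \<rho>: "0 < \<rho>" "\<rho> < 1" unfolding \<rho>_def using ab by auto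
  define p where "p = arccos ((m - x) / r)"
  have "-1 \<le> (m - x) / r" "(m - x) / r < 1"
    unfolding m_def r_def using x ab by (auto simp: field_simps)
  then have p: "0 \<le> p" "p \<le> pi" and cos_p: "cos p = (m - x) / r"
    unfolding p_def by (auto intro: arccos_lbound arccos_ubound cos_arccos)
  have x_eq: "x = m - r * cos p" unfolding cos_p using r by simp
  define P0 where "P0 = r / (2 * pi) * (2 * b - r) + al / pi * (1 + sqrt a / sqrt b)"
  define P1 where "P1 = r * m / pi"
  define P2 where "P2 = - (r^2 / (2 * pi))"
  define P3 where "P3 = - 2 * al / pi"
  define g where "g t = P0 + P1 * cos t + P2 * cos (2 * t) + P3 * cos_geom \<rho> t" for t
  note combination = set_integral_log_cos_diff_combination[OF p less_imp_le[OF \<rho>(1)] \<rho>(2),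
      of "ln r" P0 P1 P2 P3, folded g_def]
  have "nu_density al a b (m - r * cos t) * (r * sin t) = g t" if "0 < t" "t < pi" for t
    unfolding g_def m_def r_def \<rho>_def nu_density_cos_pullback[OF ab that]
    unfolding P0_def P1_def P2_def P3_def r_def[symmetric] m_def[symmetric]
    by (simp add: field_simps power2_eq_square)
  from log_potential_cos_substitution[OF r p nu_density_measurable this combination(1)]
  have "(LBINT t:{m - r..m + r}. ln (1 / \<bar>x - t\<bar>) * nu_density al a b t)
      = - (LBINT t:{0..pi}. (ln r + log_cos_diff p t) * g t)"
    unfolding x_eq by simp
  moreover have "m - r = a" "m + r = b" unfolding m_def r_def by (simp_all add: field_simps)
  moreover have "(LBINT t:{a<..b}. f t) = (LBINT t:{a..b}. f t)" for f :: "real \<Rightarrow> real"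
    using interval_integral_Icc[of a b f] interval_integral_Ioc[of a b f] ab by simp
  ultimately have integral: "(LBINT t:{a<..b}. ln (1 / \<bar>x - t\<bar>) * nu_density al a b t)
      = - (LBINT t:{0..pi}. (ln r + log_cos_diff p t) * g t)"
    by simp
  have ln_cos_geom_denom: "ln (1 - 2 * \<rho> * cos p + \<rho>^2) = ln 2 + ln \<rho> + ln x - ln r"
  proof -
    have "1 - 2 * \<rho> * cos p + \<rho>^2 = 2 * \<rho> * x / r"
      using cos_quadratic_sqrt_ratio[OF ab, of p] unfolding x_eq \<rho>_def m_def r_def .
    then show ?thesis using \<rho> r x ab by (simp add: ln_div ln_mult)
  qed
  have "b - a = r * 2" "(b - a) / 4 = r / 2" unfolding r_def by simp_all
  then have ln_r: "ln (b - a) = ln r + ln 2" "ln ((b - a) / 4) = ln r - ln 2"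
    using r by (simp_all add: ln_mult ln_div)
  have ln_\<rho>: "ln ((sqrt b + sqrt a) / (sqrt b - sqrt a)) = - ln \<rho>"
    using \<rho> unfolding \<rho>_def by (simp add: ln_div)
  have ln_inv: "ln (1 / x) = - ln x" using x ab by (simp add: ln_div)
  have "0 < sqrt a" "sqrt a < sqrt b" "a = sqrt a ^ 2" "b = sqrt b ^ 2" using ab by auto
  from nu_potential_algebra[OF this ln_r ln_\<rho>, of al x "ln x", folded m_def r_def,
      folded P0_def P1_def P2_def P3_def cos_p, unfolded m_def r_def]
  show ?thesis
    unfolding integral combination(2) cos_double_cos ln_cos_geom_denom
      real_sqrt_mult ln_inv
    unfolding m_def r_def .
qed

section \<open>The endpoints \<open>a\<close> and \<open>b\<close>\<close>

lemma psi_alpha_self: "0 < a \<Longrightarrow> psi_alpha al a a = -2"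
  unfolding psi_alpha_def by simp

lemma psi_alpha_continuous_on: "0 < a \<Longrightarrow> continuous_on {a..c} (\<lambda>x. psi_alpha al x a)"
  unfolding psi_alpha_def by (intro continuous_intros) auto

lemma psi_alpha_root_exists:
  assumes a: "0 < a" and al: "0 \<le> al"
  shows "\<exists>x. a < x \<and> x < a + (2 * al + 2) \<and> psi_alpha al x a = 0"
proof -
  define D where "D = 2 * al + 2"
  have D2: "2 \<le> D" unfolding D_def using al by simp
  have "psi_alpha al (a + D) a \<ge> 3/4 * D^2 - 2 * al - 2"
  proof -
    have "0 \<le> a * D" using a D2 by simp
    moreover have "0 \<le> 2 * al * (sqrt a / sqrt (a + D))" using a al D2 by simp
    ultimately show ?thesis unfolding psi_alpha_def by simp
  qed
  moreover have "3/4 * D^2 - 2 * al - 2 > 0"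
  proof -
    have "3/4 * D^2 \<ge> 3/4 * (2 * D)" using D2 by (simp add: power2_eq_square)
    then show ?thesis unfolding D_def using al by simp
  qed
  ultimately have pos: "psi_alpha al (a + D) a > 0" by linarith
  obtain x where x: "a \<le> x" "x \<le> a + D" "psi_alpha al x a = 0"
    using IVT'[of "\<lambda>x. psi_alpha al x a" a 0 "a + D"] psi_alpha_self[OF a, of al] pos
      psi_alpha_continuous_on[OF a, of "a + D" al] D2
    by auto
  have "x \<noteq> a" using x(3) psi_alpha_self[OF a, of al] by auto
  moreover have "x \<noteq> a + D" using x(3) pos by auto
  ultimately have "a < x" "x < a + D" using x by auto
  then show ?thesis using x(3) unfolding D_def by blast
qed

lemma psi_alpha_root_less:
  assumes a: "0 < a" and al: "0 \<le> al" and x: "a < x" "psi_alpha al x a = 0"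
  shows "x < a + (2 * al + 2)"
proof (rule ccontr)
  define D where "D = 2 * al + 2"
  define d where "d = x - a"
  assume "\<not> x < a + (2 * al + 2)"
  then have dD: "D \<le> d" unfolding D_def d_def by simp
  have D2: "2 \<le> D" unfolding D_def using al by simp
  have "0 \<le> a * d" using a x unfolding d_def by simp
  moreover have "0 \<le> 2 * al * (sqrt a / sqrt x)" using a al x by simp
  ultimately have "3/4 * d^2 \<le> D" using x(2) unfolding psi_alpha_def D_def d_def by simp
  moreover have "3/4 * d^2 \<ge> 3/4 * (2 * d)" using dD D2 by (simp add: power2_eq_square)
  ultimately show False using dD D2 by simp
qed

definition dpsi_alpha :: "real \<Rightarrow> real \<Rightarrow> real \<Rightarrow> real" where
  "dpsi_alpha al x a = 3/2 * (x - a) + a - al * sqrt a / (x * sqrt x)"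

lemma psi_alpha_has_derivative:
  assumes "0 < a" "0 < x"
  shows "((\<lambda>x. psi_alpha al x a) has_real_derivative dpsi_alpha al x a) (at x)"
proof -
  have "inverse (sqrt x) * (inverse (sqrt x) * inverse (sqrt x)) = inverse (sqrt x) / x"
    using assms by (simp add: field_simps)
  then have "((\<lambda>x. 3/4 * (x - a)^2 + a * (x - a) + 2 * al * (sqrt a / sqrt x) - 2 * al - 2)
      has_real_derivative dpsi_alpha al x a) (at x)"
    using assms by (auto intro!: derivative_eq_intros simp: dpsi_alpha_def field_simps)
  then show ?thesis unfolding psi_alpha_def[abs_def] by simp
qed

lemma dpsi_alpha_strict_mono:
  assumes "0 < a" "0 \<le> al" "0 < u" "u < v"
  shows "dpsi_alpha al u a < dpsi_alpha al v a"
proof -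
  have "u * sqrt u \<le> v * sqrt v" using assms by (intro mult_mono) auto
  moreover have "0 < u * sqrt u" using assms by simp
  ultimately have "al * sqrt a / (v * sqrt v) \<le> al * sqrt a / (u * sqrt u)"
    using assms by (intro divide_left_mono) auto
  moreover have "3/2 * (u - a) < 3/2 * (v - a)" using assms by simp
  ultimately show ?thesis unfolding dpsi_alpha_def by linarith
qed

text \<open>Between \<open>a\<close> and a first root the mean value theorem gives a point where
  \<open>dpsi_alpha\<close> is positive, between two roots a later point where it vanishes.\<close>
lemma psi_alpha_root_unique:
  assumes a: "0 < a" and al: "0 \<le> al"
    and x: "a < x" "psi_alpha al x a = 0" and y: "a < y" "psi_alpha al y a = 0"
  shows "x = y"
proof -
  have no_second_root: False
    if u: "a < u" "u < v" "psi_alpha al u a = 0" "psi_alpha al v a = 0" for u v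
  proof -
    have deriv: "\<forall>t. a \<le> t \<and> t \<le> v \<longrightarrow>
        ((\<lambda>x. psi_alpha al x a) has_real_derivative dpsi_alpha al t a) (at t)"
      using a by (auto intro!: psi_alpha_has_derivative)
    obtain e where e: "a < e" "e < u"
      "psi_alpha al u a - psi_alpha al a a = (u - a) * dpsi_alpha al e a"
      using MVT2[of a u "\<lambda>x. psi_alpha al x a" "\<lambda>x. dpsi_alpha al x a"] u deriv by auto
    obtain z where z: "u < z" "z < v"
      "psi_alpha al v a - psi_alpha al u a = (v - u) * dpsi_alpha al z a"
      using MVT2[of u v "\<lambda>x. psi_alpha al x a" "\<lambda>x. dpsi_alpha al x a"] u deriv by auto
    have "(u - a) * dpsi_alpha al e a = 2" using e(3) u psi_alpha_self[OF a, of al] by simp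
    then have "0 < (u - a) * dpsi_alpha al e a" by simp
    then have "0 < dpsi_alpha al e a" using u(1) by (simp add: zero_less_mult_iff)
    moreover have "dpsi_alpha al z a = 0" using z(3) u by simp
    moreover have "dpsi_alpha al e a < dpsi_alpha al z a"
      using dpsi_alpha_strict_mono[OF a al, of e z] e z a by simp
    ultimately show False by simp
  qed
  show ?thesis
    using no_second_root[of x y] no_second_root[of y x] x y by (cases x y rule: linorder_cases) auto
qed

lemma less_THE_psi_alpha_root:
  assumes "0 < a" "0 \<le> al"
  shows "a < (THE x. a < x \<and> psi_alpha al x a = 0)"
proof -
  obtain x where x: "a < x" "psi_alpha al x a = 0" using psi_alpha_root_exists[OF assms] by blast
  have "(THE x. a < x \<and> psi_alpha al x a = 0) = x"
    by (rule the_equality) (use x psi_alpha_root_unique[OF assms] in auto)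
  then show ?thesis using x by simp
qed

lemma E_alpha_memI:
  "0 < a \<Longrightarrow> a < x \<Longrightarrow> 0 \<le> phi_alpha al x a \<Longrightarrow> psi_alpha al x a = 0 \<Longrightarrow> a \<in> E_alpha al"
  unfolding E_alpha_def by auto

lemma E_alpha_nonempty:
  assumes al: "0 < al"
  shows "al + 1 \<in> E_alpha al"
proof -
  define a where "a = al + 1"
  have a: "0 < a" unfolding a_def using al by simp
  obtain x where x: "a < x" "psi_alpha al x a = 0"
    using psi_alpha_root_exists[OF a, of al] al by auto
  have "a \<le> sqrt (a * x)"
    using x a real_sqrt_le_mono[of "a * a" "a * x"] by (simp add: mult_left_mono)
  moreover have "0 < sqrt (a * x) * a" using x a by simp
  ultimately have "2 * al / sqrt (a * x) \<le> 2 * al / a" using al a by (intro divide_left_mono) auto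
  also have "\<dots> \<le> 2" unfolding a_def using al by (simp add: divide_le_eq)
  also have "2 \<le> x + a" using x unfolding a_def using al by simp
  finally have "0 \<le> phi_alpha al x a" unfolding phi_alpha_def by simp
  then show ?thesis using E_alpha_memI[OF a x(1) _ x(2)] unfolding a_def by simp
qed

lemma E_alpha_lower_bound:
  assumes al: "0 < al" and "a \<in> E_alpha al"
  shows "min 1 (4 * al^2 / ((2 + (2 * al + 2))^2 * (1 + (2 * al + 2)))) \<le> a"
proof -
  obtain x where a: "0 < a" and x: "a < x" "0 \<le> phi_alpha al x a" "psi_alpha al x a = 0"
    using assms(2) unfolding E_alpha_def by auto
  show ?thesis
  proof (cases "a \<le> 1")
    case True
    define D where "D = 2 * al + 2"
    have xD: "x < a + D" using psi_alpha_root_less[OF a _ x(1,3)] al unfolding D_def by simp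
    have x0: "0 < x" using a x by simp
    have "2 * al / sqrt (a * x) \<le> x + a" using x(2) unfolding phi_alpha_def by simp
    then have "2 * al \<le> (x + a) * sqrt (a * x)" using a x0 by (simp add: divide_le_eq)
    then have "(2 * al)^2 \<le> ((x + a) * sqrt (a * x))^2" using al by (intro power_mono) auto
    also have "\<dots> = (x + a)^2 * a * x" using a x0 by (simp add: power_mult_distrib)
    also have "\<dots> \<le> (2 + D)^2 * a * (1 + D)"
    proof -
      have "(x + a)^2 \<le> (2 + D)^2" using xD True a x0 by (intro power_mono) auto
      moreover have "x \<le> 1 + D" using xD True by simp
      ultimately have "(x + a)^2 * x \<le> (2 + D)^2 * (1 + D)"
        using x0 by (intro mult_mono) auto
      then show ?thesis using a by (simp add: mult.commute mult.left_commute)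
    qed
    finally have "4 * al^2 \<le> a * ((2 + D)^2 * (1 + D))" by (simp add: power_mult_distrib mult_ac)
    moreover have "0 < (2 + D)^2 * (1 + D)" unfolding D_def using al by simp
    ultimately have "4 * al^2 / ((2 + D)^2 * (1 + D)) \<le> a" by (simp add: divide_le_eq)
    then show ?thesis unfolding D_def by simp
  qed simp
qed

text \<open>\<open>E_alpha al \<inter> {..c}\<close> is the projection of a compact set of pairs \<open>(a, x)\<close>:
  \<open>a\<close> is bounded away from \<open>0\<close> by \<open>E_alpha_lower_bound\<close> and \<open>x < a + 2 al + 2\<close>.\<close>
lemma compact_E_alpha_atMost:
  assumes al: "0 < al"
  shows "compact (E_alpha al \<inter> {..c})"
proof -
  define \<epsilon> where "\<epsilon> = min 1 (4 * al^2 / ((2 + (2 * al + 2))^2 * (1 + (2 * al + 2))))"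
  have \<epsilon>: "0 < \<epsilon>" unfolding \<epsilon>_def using al by simp
  define S0 where "S0 = {\<epsilon>..c} \<times> {\<epsilon>..c + (2 * al + 2)}"
  define S1 where "S1 = {p \<in> S0. fst p \<le> snd p}"
  define S2 where "S2 = {p \<in> S1. 0 \<le> phi_alpha al (snd p) (fst p)}"
  define K where "K = {p \<in> S2. psi_alpha al (snd p) (fst p) = 0}"
  have pos: "0 < fst p" "0 < snd p" if "p \<in> S1" for p
    using that \<epsilon> unfolding S1_def S0_def by (auto simp: mem_Times_iff)
  have "compact S0" unfolding S0_def by (intro compact_Times compact_Icc)
  have "closed S1" unfolding S1_def
    by (intro continuous_on_closed_Collect_le compact_imp_closed \<open>compact S0\<close> continuous_intros)
  moreover have "continuous_on S1 (\<lambda>p. phi_alpha al (snd p) (fst p))"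
    unfolding phi_alpha_def using pos by (intro continuous_intros) (auto, force+)
  ultimately have "closed S2"
    unfolding S2_def by (intro continuous_on_closed_Collect_le continuous_intros)
  moreover have "continuous_on S2 (\<lambda>p. psi_alpha al (snd p) (fst p))"
    unfolding psi_alpha_def S2_def using pos by (intro continuous_intros) (auto, force+)
  ultimately have "closed K" unfolding K_def by (intro continuous_closed_preimage_constant)
  moreover have "K \<subseteq> S0" unfolding K_def S2_def S1_def by auto
  ultimately have "compact K" using \<open>compact S0\<close> by (metis compact_Int_closed inf.absorb_iff2)
  moreover have "E_alpha al \<inter> {..c} = fst ` K"
  proof (intro equalityI subsetI)
    fix a assume a: "a \<in> E_alpha al \<inter> {..c}"
    then obtain x where x: "0 < a" "a < x" "0 \<le> phi_alpha al x a" "psi_alpha al x a = 0"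
      unfolding E_alpha_def by auto
    have "\<epsilon> \<le> a" using E_alpha_lower_bound[OF al] a unfolding \<epsilon>_def by auto
    moreover have "x < a + (2 * al + 2)" using psi_alpha_root_less[OF x(1) _ x(2,4)] al by simp
    ultimately have "(a, x) \<in> K" using a x unfolding K_def S2_def S1_def S0_def by auto
    then show "a \<in> fst ` K" by force
  next
    fix a assume "a \<in> fst ` K"
    then obtain x where "(a, x) \<in> K" by auto
    then have "0 < a" "a \<le> x" "a \<le> c" "0 \<le> phi_alpha al x a" "psi_alpha al x a = 0"
      using \<epsilon> unfolding K_def S2_def S1_def S0_def by auto
    moreover have "x \<noteq> a" using \<open>0 < a\<close> \<open>psi_alpha al x a = 0\<close> psi_alpha_self by force
    ultimately show "a \<in> E_alpha al \<inter> {..c}" using E_alpha_memI[of a x] by auto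
  qed
  ultimately show ?thesis
    using compact_continuous_image[OF continuous_on_fst[OF continuous_on_id]] by simp
qed

lemma a_crit_mem_E_alpha:
  assumes "0 < al"
  shows "a_crit al \<in> E_alpha al"
proof -
  have "E_alpha al \<inter> {..al + 1} \<noteq> {}" using E_alpha_nonempty[OF assms] by auto
  from compact_attains_inf[OF compact_E_alpha_atMost[OF assms] this]
  obtain a where a: "a \<in> E_alpha al" "a \<le> al + 1"
    and min: "\<forall>y \<in> E_alpha al \<inter> {..al + 1}. a \<le> y"
    by auto
  have "a_crit al = a" unfolding a_crit_def
  proof (rule Least_equality)
    show "a \<le> y" if "y \<in> E_alpha al" for y
      using min that a(2) by (cases "y \<le> al + 1") auto
  qed (rule a(1))
  then show ?thesis using a by simp
qed

theorem proposition4p3: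
  fixes \<sigma> \<alpha> a b :: real
  assumes "\<sigma> \<ge> 0" and "\<alpha> \<ge> 0"
    and ab: "(\<alpha> > 0 \<and> a = max \<sigma> (a_crit \<alpha>) \<and> b = (THE x. x > a \<and> psi_alpha \<alpha> x a = 0))
           \<or> (\<alpha> = 0 \<and> \<sigma> > 0 \<and> a = \<sigma> \<and> b = 2/3 * (sqrt (\<sigma>^2 + 6) + \<sigma> / 2))"
  shows "\<forall>x\<in>{a<..b}.
     (LINT t:{a<..b}|lborel. ln (1 / \<bar>x - t\<bar>) * nu_density \<alpha> a b t)
       + 1/2 * (x^2 + 2 * \<alpha> * ln (1 / x))
     = - 1/16 * (a^2 + 6*a*b + b^2 + 2 * (a - b)^2 * ln ((b - a) / 4) - 4 * (a + b)^2
                 + 4 * (b^2 - a^2) * ln ((b - a) / 4))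
       - \<alpha> / sqrt (a * b) * ((a + b) / 2 - (b - a) / 2 * ln ((b - a) / 4)
                 - (a + b) * (1/2 + ln 2 - 1/2 * ln (b - a))
                 + sqrt (a * b) * ln ((sqrt b + sqrt a) / (sqrt b - sqrt a)))"
proof -
  have "0 < a \<and> a < b"
    using ab
  proof (elim disjE conjE)
    assume "0 < \<alpha>" and a: "a = max \<sigma> (a_crit \<alpha>)"
      and b: "b = (THE x. x > a \<and> psi_alpha \<alpha> x a = 0)"
    have "0 < a_crit \<alpha>" using a_crit_mem_E_alpha[OF \<open>0 < \<alpha>\<close>] unfolding E_alpha_def by simp
    then have "0 < a" unfolding a by simp
    then show ?thesis using less_THE_psi_alpha_root[OF _ \<open>\<alpha> \<ge> 0\<close>] unfolding b by simp
  next
    assume "0 < \<sigma>" "a = \<sigma>" "b = 2/3 * (sqrt (\<sigma>^2 + 6) + \<sigma> / 2)"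
    moreover have "sqrt (\<sigma>^2) < sqrt (\<sigma>^2 + 6)" by (rule real_sqrt_less_mono) simp
    ultimately show ?thesis by simp
  qed
  then show ?thesis using nu_potential_eq by auto
qed

end
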